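(* Let $M$ be any infinite subset of a finite-dimensional real Banach space (viewed as a pointed metric space with the induced metric) and let $Y$ be an infinite-dimensional real Banach space. Then $\mathrm{A}(M,Y)\subsetneqq\mathrm{Lip}_0(M,Y)$.
   Context: Throughout, metric spaces are complete and pointed, with a base point $0$. $\mathrm{Lip}_0(M,Y)$ is the Banach space of Lipschitz maps $f:M\to Y$ with $f(0)=0$, normed by $\|f\|=\sup_{p\neq q}\|f(p)-f(q)\|/d(p,q)$. A map $f$ attains its norm toward $y\in Y$ if there is a sequence $(p_n,q_n)$ in $M\times M$ with $p_n\neq q_n$ such that $[f(p_n)-f(q_n)]/d(p_n,q_n)\to y$ and $\|y\|=\|f\|$; $\mathrm{A}(M,Y)$ is the set of $f$ attaining their norm toward some vector. *)

theory Defs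
  imports "HOL-Analysis.Analysis"
begin

definition fin_dim_space :: "'a::real_vector itself \<Rightarrow> bool" where
  "fin_dim_space _ \<longleftrightarrow> (\<exists>B::'a set. finite B \<and> span B = UNIV)"

text \<open>Lip_0(M,Y) for the pointed metric space (M, base) with values in Y.
  Maps are represented as functions on the ambient type, normalised to 0 outside M.\<close>
definition Lip0 :: "'a::metric_space set \<Rightarrow> 'a \<Rightarrow> ('a \<Rightarrow> 'b::real_normed_vector) set" where
  "Lip0 M base = {f. f base = 0 \<and> (\<exists>L. L-lipschitz_on M f) \<and> (\<forall>x. x \<notin> M \<longrightarrow> f x = 0)}"

definition lip_norm :: "'a::metric_space set \<Rightarrow> ('a \<Rightarrow> 'b::real_normed_vector) \<Rightarrow> real" where
  "lip_norm M f = Sup {norm (f p - f q) / dist p q | p q. p \<in> M \<and> q \<in> M \<and> p \<noteq> q}"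

definition attains_norm_toward ::
  "'a::metric_space set \<Rightarrow> ('a \<Rightarrow> 'b::real_normed_vector) \<Rightarrow> 'b \<Rightarrow> bool" where
  "attains_norm_toward M f y \<longleftrightarrow>
     (\<exists>p q :: nat \<Rightarrow> 'a. (\<forall>n. p n \<in> M \<and> q n \<in> M \<and> p n \<noteq> q n) \<and>
        ((\<lambda>n. (1 / dist (p n) (q n)) *\<^sub>R (f (p n) - f (q n))) \<longlonglongrightarrow> y) \<and>
        norm y = lip_norm M f)"

definition A_set :: "'a::metric_space set \<Rightarrow> 'a \<Rightarrow> ('a \<Rightarrow> 'b::real_normed_vector) set" where
  "A_set M base = {f \<in> Lip0 M base. \<exists>y. attains_norm_toward M f y}"

end

theory Submission
  imports Defs
begin

text \<open>Riesz's lemma gives unit vectors \<open>v n\<close> of the infinite-dimensional space with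
  \<open>norm (v n - t *\<^sub>R v m) \<ge> 1/2\<close> for \<open>m < n\<close>. Since closed balls of the finite-dimensional space
  are compact, the infinite set \<open>M\<close> contains points \<open>x n\<close>, \<open>y n\<close> whose distances
  \<open>a n > b n\<close> to a fixed point \<open>c\<close> (an accumulation point of \<open>M\<close>, or \<open>0\<close> if \<open>M\<close> is
  unbounded) are lacunary. Placing on the real line tents of radius \<open>a n - b n\<close> centred at
  \<open>a n\<close>, with values \<open>(1 - 1/(n+2)) * tent\<^sub>n * v n\<close>, and composing with \<open>dist \<cdot> c\<close> gives
  \<open>f \<in> Lip0 M base\<close>. Each difference quotient of \<open>f\<close> is \<open>\<alpha> v n + \<beta> v m\<close> with
  \<open>\<bar>\<alpha>\<bar> + \<bar>\<beta>\<bar> \<le> 1 - 1/(max n m + 2)\<close> and \<open>min \<bar>\<alpha>\<bar> \<bar>\<beta>\<bar> \<le> 1/(max n m + 1)\<close>, and the pairs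
  \<open>(x n, y n)\<close> show that the Lipschitz norm is \<open>1\<close>. A limit of norm \<open>1\<close> of such quotients
  would be a limit of \<open>\<alpha>\<^sub>k v n\<^sub>k\<close> with \<open>\<bar>\<alpha>\<^sub>k\<bar> \<rightarrow> 1\<close> and \<open>n\<^sub>k \<rightarrow> \<infinity>\<close>, which the
  separation of the \<open>v n\<close> rules out.\<close>

section \<open>Finite-dimensional subspaces and Riesz's lemma\<close>

lemma closed_if_Int_cball_compact:
  fixes S :: "'a::real_normed_vector set"
  assumes "\<And>R. compact (S \<inter> cball 0 R)"
  shows "closed S"
  unfolding closed_sequential_limits
proof (intro allI impI, elim conjE)
  fix x l assume S: "\<forall>n. x n \<in> S" and lim: "x \<longlonglongrightarrow> l"
  have "norm (x n) \<le> norm l + 1" if "dist (x n) l < 1" for n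
    using that norm_triangle_ineq2[of "x n" l] by (simp add: dist_norm)
  moreover have "\<forall>\<^sub>F n in sequentially. dist (x n) l < 1"
    using lim by (simp add: tendsto_iff)
  ultimately have "\<forall>\<^sub>F n in sequentially. x n \<in> S \<inter> cball 0 (norm l + 1)"
    using S by (auto elim: eventually_mono)
  then have "l \<in> S \<inter> cball 0 (norm l + 1)"
    using Lim_in_closed_set[OF compact_imp_closed[OF assms] _ _ lim] by simp
  then show "l \<in> S" by blast
qed

lemma span_insert_coefficient_bound:
  fixes F :: "'a::real_normed_vector set"
  assumes "closed (span F)" "v \<notin> span F"
  obtains d where "d > 0" "\<And>s t. s \<in> span F \<Longrightarrow> \<bar>t\<bar> * d \<le> norm (s + t *\<^sub>R v)"
proof
  show "infdist v (span F) > 0"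
    using assms infdist_pos_not_in_closed span_zero by blast
  fix s t assume s: "s \<in> span F"
  show "\<bar>t\<bar> * infdist v (span F) \<le> norm (s + t *\<^sub>R v)"
  proof (cases "t = 0")
    case False
    have "- (1/t) *\<^sub>R s \<in> span F" using s by (simp add: span_scale span_neg)
    then have "infdist v (span F) \<le> dist v (- (1/t) *\<^sub>R s)" by (rule infdist_le)
    also have "\<dots> = norm ((1/t) *\<^sub>R (s + t *\<^sub>R v))"
      using False by (simp add: dist_norm algebra_simps)
    also have "\<dots> = norm (s + t *\<^sub>R v) / \<bar>t\<bar>" by simp
    finally show ?thesis using False by (simp add: field_simps)
  qed simp
qed

lemma span_insert_Int_cball_subset:
  fixes F :: "'a::real_normed_vector set"
  assumes "d > 0" "\<And>s t. s \<in> span F \<Longrightarrow> \<bar>t\<bar> * d \<le> norm (s + t *\<^sub>R v)"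
  shows "span (insert v F) \<inter> cball 0 R \<subseteq>
    (\<lambda>(s, t). s + t *\<^sub>R v) ` ((span F \<inter> cball 0 (R + R / d * norm v)) \<times> cball (0::real) (R / d))"
proof
  fix x assume x: "x \<in> span (insert v F) \<inter> cball 0 R"
  then obtain t where s: "x - t *\<^sub>R v \<in> span F" using span_insert by blast
  have "\<bar>t\<bar> * d \<le> R" using assms(2)[OF s, of t] x by simp
  then have t: "\<bar>t\<bar> \<le> R / d" using assms(1) by (simp add: field_simps)
  have "norm (x - t *\<^sub>R v) \<le> R + \<bar>t\<bar> * norm v"
    using norm_triangle_ineq4[of x "t *\<^sub>R v"] x by simp
  also have "\<dots> \<le> R + R / d * norm v" using mult_right_mono[OF t, of "norm v"] by simp
  finally have "(x - t *\<^sub>R v, t) \<in> (span F \<inter> cball 0 (R + R / d * norm v)) \<times> cball (0::real) (R / d)"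
    using s t by simp
  then show "x \<in> (\<lambda>(s, t). s + t *\<^sub>R v) ` ((span F \<inter> cball 0 (R + R / d * norm v)) \<times> cball (0::real) (R / d))"
    by (rule rev_image_eqI) simp
qed

lemma compact_span_Int_cball:
  fixes F :: "'a::real_normed_vector set"
  assumes "finite F"
  shows "compact (span F \<inter> cball 0 R)"
  using assms
proof (induction F arbitrary: R rule: finite_induct)
  case empty
  show ?case by (simp add: finite_imp_compact finite_subset[of _ "{0}"])
next
  case (insert v F)
  show ?case
  proof (cases "v \<in> span F")
    case True
    then show ?thesis using insert.IH by (simp add: span_redundant)
  next
    case False
    have "closed (span F)" using insert.IH by (rule closed_if_Int_cball_compact)
    then obtain d where d: "d > 0" "\<And>s t. s \<in> span F \<Longrightarrow> \<bar>t\<bar> * d \<le> norm (s + t *\<^sub>R v)"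
      using False span_insert_coefficient_bound by blast
    define K where "K = (\<lambda>(s, t). s + t *\<^sub>R v) ` ((span F \<inter> cball 0 (R + R / d * norm v)) \<times> cball (0::real) (R / d))"
    have "compact K"
      unfolding K_def
      by (intro compact_continuous_image compact_Times insert.IH compact_cball)
        (auto intro!: continuous_intros simp: case_prod_unfold)
    moreover have "K \<subseteq> span (insert v F)"
      unfolding K_def by (auto intro!: span_add span_scale intro: span_base span_mono[THEN subsetD, of F])
    then have "span (insert v F) \<inter> cball 0 R = K \<inter> cball 0 R"
      using span_insert_Int_cball_subset[OF d, where R=R] unfolding K_def by blast
    ultimately show ?thesis by (simp add: compact_Int_closed)
  qed
qed

lemma riesz_lemma:
  fixes F :: "'a::real_normed_vector set"
  assumes "finite F" "span F \<noteq> UNIV"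
  obtains u where "norm u = 1" "\<And>w. w \<in> span F \<Longrightarrow> 1/2 \<le> norm (u - w)"
proof -
  have span_closed: "closed (span F)"
    using compact_span_Int_cball[OF assms(1)] by (rule closed_if_Int_cball_compact)
  obtain x where x: "x \<notin> span F" using assms(2) by auto
  define d where "d = infdist x (span F)"
  have "d > 0" unfolding d_def using span_closed x infdist_pos_not_in_closed span_zero by blast
  then have "infdist x (span F) < 2 * d" by (simp add: d_def)
  moreover have "span F \<noteq> {}" using span_zero by blast
  ultimately obtain w0 where w0: "w0 \<in> span F" "dist x w0 < 2 * d"
    by (auto simp: infdist_notempty cINF_less_iff bdd_below_image_dist)
  define e where "e = norm (x - w0)"
  have "e > 0" unfolding e_def using w0 x by auto
  show thesis
  proof
    show "norm ((1/e) *\<^sub>R (x - w0)) = 1" using \<open>e > 0\<close> by (simp add: e_def)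
    fix w assume w: "w \<in> span F"
    have "w0 + e *\<^sub>R w \<in> span F" using w w0 by (simp add: span_add span_scale)
    then have "d \<le> dist x (w0 + e *\<^sub>R w)" unfolding d_def by (rule infdist_le)
    also have "\<dots> = norm (e *\<^sub>R ((1/e) *\<^sub>R (x - w0) - w))"
      using \<open>e > 0\<close> by (simp add: dist_norm algebra_simps)
    also have "\<dots> = e * norm ((1/e) *\<^sub>R (x - w0) - w)"
      using \<open>e > 0\<close> by simp
    finally have "d \<le> e * norm ((1/e) *\<^sub>R (x - w0) - w)" .
    moreover have "e < 2 * d" using w0(2) by (simp add: e_def dist_norm)
    ultimately have "e * 1 < e * (2 * norm ((1/e) *\<^sub>R (x - w0) - w))" by linarith
    then show "1/2 \<le> norm ((1/e) *\<^sub>R (x - w0) - w)"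
      using \<open>e > 0\<close> by (simp only: mult_less_cancel_left_pos)
  qed
qed

definition riesz_sequence :: "(nat \<Rightarrow> 'a::real_normed_vector) \<Rightarrow> bool" where
  "riesz_sequence v \<longleftrightarrow>
     (\<forall>n. norm (v n) = 1) \<and> (\<forall>m n t. m < n \<longrightarrow> 1/2 \<le> norm (v n - t *\<^sub>R v m))"

lemma riesz_sequence_exists:
  assumes "\<And>F::'a::real_normed_vector set. finite F \<Longrightarrow> span F \<noteq> UNIV"
  shows "\<exists>v :: nat \<Rightarrow> 'a. riesz_sequence v"
proof -
  have "\<exists>u. norm u = 1 \<and> (\<forall>w\<in>span F. 1/2 \<le> norm (u - w))" if "finite F" for F :: "'a set"
    using riesz_lemma[OF that assms[OF that]] by metis
  then obtain pick :: "'a set \<Rightarrow> 'a" where pick: "\<And>F. finite F \<Longrightarrow>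
      norm (pick F) = 1 \<and> (\<forall>w\<in>span F. 1/2 \<le> norm (pick F - w))"
    by metis
  define V where "V = rec_nat {} (\<lambda>_ S. insert (pick S) S)"
  have V_Suc: "V (Suc n) = insert (pick (V n)) (V n)" for n by (simp add: V_def)
  have finite_V: "finite (V n)" for n by (induction n) (simp_all add: V_def)
  have V_mono: "pick (V m) \<in> V n" if "m < n" for m n
    using that by (induction n) (auto simp: V_Suc less_Suc_eq)
  have "riesz_sequence (\<lambda>n. pick (V n))"
    unfolding riesz_sequence_def
    using pick[OF finite_V] V_mono by (blast intro: span_scale span_base)
  then show ?thesis by blast
qed

lemma riesz_sequence_separated:
  assumes "riesz_sequence v" "n \<noteq> n'" "\<mu> \<le> \<bar>\<alpha>\<bar>" "\<mu> \<le> \<bar>\<alpha>'\<bar>" "\<mu> > 0"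
  shows "\<mu> / 2 \<le> norm (\<alpha> *\<^sub>R v n - \<alpha>' *\<^sub>R v n')"
proof -
  have *: "\<mu> / 2 \<le> norm (\<alpha> *\<^sub>R v n - \<alpha>' *\<^sub>R v n')"
    if "n' < n" "\<mu> \<le> \<bar>\<alpha>\<bar>" for n n' \<alpha> \<alpha>'
  proof -
    have "\<alpha> \<noteq> 0" using that \<open>\<mu> > 0\<close> by auto
    then have "norm (\<alpha> *\<^sub>R v n - \<alpha>' *\<^sub>R v n') = \<bar>\<alpha>\<bar> * norm (v n - (\<alpha>' / \<alpha>) *\<^sub>R v n')"
      by (simp add: algebra_simps flip: norm_scaleR)
    moreover have "1/2 \<le> norm (v n - (\<alpha>' / \<alpha>) *\<^sub>R v n')"
      using assms(1) that(1) unfolding riesz_sequence_def by blast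
    ultimately show ?thesis using that(2) \<open>\<mu> > 0\<close> mult_mono[of \<mu> "\<bar>\<alpha>\<bar>" "1/2"] by fastforce
  qed
  show ?thesis
  proof (cases "n' < n")
    case False
    then have "n < n'" using assms(2) by simp
    then show ?thesis using *[of n n' \<alpha>' \<alpha>] assms(4) by (simp add: norm_minus_commute)
  qed (use * assms(3) in blast)
qed

section \<open>Tent maps and their difference quotients\<close>

definition tent :: "real \<Rightarrow> real \<Rightarrow> real \<Rightarrow> real" where
  "tent c r s = max 0 (r - \<bar>s - c\<bar>)"

lemma tent_nonneg: "0 \<le> tent c r s"
  by (simp add: tent_def)

lemma tent_pos_iff: "0 < tent c r s \<longleftrightarrow> \<bar>s - c\<bar> < r"
  by (auto simp: tent_def)

lemma tent_le_radius: "0 < tent c r s \<Longrightarrow> tent c r s \<le> r"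
  by (simp add: tent_def)

lemma tent_lipschitz: "\<bar>tent c r s - tent c r t\<bar> \<le> \<bar>s - t\<bar>"
  by (simp add: tent_def abs_if split: if_splits) (smt (verit) abs_triangle_ineq4)

definition separated_tents :: "(nat \<Rightarrow> real) \<Rightarrow> (nat \<Rightarrow> real) \<Rightarrow> bool" where
  "separated_tents c r \<longleftrightarrow>
     (\<forall>n m. n \<noteq> m \<longrightarrow> r n + r m + (real (max n m) + 1) * min (r n) (r m) \<le> \<bar>c n - c m\<bar>)"

lemma separated_tents_vanish:
  assumes "separated_tents c r" "\<bar>s - c n\<bar> \<le> r n" "m \<noteq> n"
  shows "tent (c m) (r m) s = 0"
proof (rule ccontr)
  assume "tent (c m) (r m) s \<noteq> 0"
  then have m: "\<bar>s - c m\<bar> < r m" using tent_nonneg tent_pos_iff by (metis order_le_less)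
  have "r n + r m + (real (max n m) + 1) * min (r n) (r m) \<le> \<bar>c n - c m\<bar>"
    using assms(1,3) unfolding separated_tents_def by metis
  moreover have "0 \<le> (real (max n m) + 1) * min (r n) (r m)"
    using assms(2) m abs_ge_zero[of "s - c n"] by (intro mult_nonneg_nonneg) auto
  ultimately show False using assms(2) m by linarith
qed

lemma separated_tents_active_index:
  assumes "separated_tents c r"
  obtains n where "\<And>m. m \<noteq> n \<Longrightarrow> tent (c m) (r m) s = 0"
proof (cases "\<exists>n. 0 < tent (c n) (r n) s")
  case True
  then show thesis
    using that separated_tents_vanish[OF assms] tent_pos_iff less_imp_le by metis
next
  case False
  then show thesis using that tent_nonneg by (metis order_le_less)
qed

lemma tent_pair_bound:
  assumes "separated_tents c r" "n \<noteq> m" "tent (c m) (r m) s = 0" "tent (c n) (r n) t = 0"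
  defines "x \<equiv> tent (c n) (r n) s" and "y \<equiv> tent (c m) (r m) t"
  shows "x + y + (real (max n m) + 1) * min x y \<le> \<bar>s - t\<bar>"
proof (cases "0 < x \<and> 0 < y")
  case True
  have "r n + r m + (real (max n m) + 1) * min (r n) (r m) \<le> \<bar>c n - c m\<bar>"
    using assms(1,2) unfolding separated_tents_def by metis
  moreover have "x = r n - \<bar>s - c n\<bar>" "y = r m - \<bar>t - c m\<bar>"
    using True unfolding x_def y_def tent_def by auto
  moreover have "min x y \<le> min (r n) (r m)"
    using True tent_le_radius unfolding x_def y_def by (simp add: min.coboundedI1 min.coboundedI2)
  ultimately show ?thesis
    using mult_left_mono[of "min x y" "min (r n) (r m)" "real (max n m) + 1"] by linarith
next
  case False
  then have "x = 0 \<or> y = 0" using tent_nonneg unfolding x_def y_def by (metis order_le_less)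
  then show ?thesis
    using tent_lipschitz[of "c n" "r n" s t] tent_lipschitz[of "c m" "r m" s t] assms(3,4)
      tent_nonneg[of "c n" "r n" s] tent_nonneg[of "c m" "r m" t]
    unfolding x_def y_def by (auto simp: abs_minus_commute)
qed

definition weight :: "nat \<Rightarrow> real" where
  "weight n = 1 - 1 / (real n + 2)"

lemma weight_pos: "0 < weight n"
  by (simp add: weight_def field_simps)

lemma weight_le_1: "weight n \<le> 1"
  by (simp add: weight_def)

lemma weight_mono: "m \<le> n \<Longrightarrow> weight m \<le> weight n"
  by (simp add: weight_def frac_le)

text \<open>If no tent is active at \<open>s\<close>, the index chosen by \<open>SOME\<close> is arbitrary, but the value is \<open>0\<close>.\<close>
definition tent_map :: "(nat \<Rightarrow> real) \<Rightarrow> (nat \<Rightarrow> real) \<Rightarrow> (nat \<Rightarrow> 'a::real_normed_vector) \<Rightarrow> real \<Rightarrow> 'a"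
  where "tent_map c r v s =
    (let n = SOME n. 0 < tent (c n) (r n) s in (weight n * tent (c n) (r n) s) *\<^sub>R v n)"

lemma tent_map_eq:
  assumes "\<And>m. m \<noteq> n \<Longrightarrow> tent (c m) (r m) s = 0"
  shows "tent_map c r v s = (weight n * tent (c n) (r n) s) *\<^sub>R v n"
proof -
  define k where "k = (SOME n. 0 < tent (c n) (r n) s)"
  have "tent (c k) (r k) s = 0 \<and> tent (c n) (r n) s = 0" if "k \<noteq> n"
  proof -
    have "tent (c k) (r k) s = 0" using assms that by blast
    moreover have "\<not> 0 < tent (c n) (r n) s"
      using someI[of "\<lambda>n. 0 < tent (c n) (r n) s" n] calculation unfolding k_def by force
    ultimately show ?thesis using tent_nonneg by (metis order_le_less)
  qed
  then show ?thesis unfolding tent_map_def k_def[symmetric] Let_def by (cases "k = n") auto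
qed

definition slope_set :: "(nat \<Rightarrow> 'a::real_normed_vector) \<Rightarrow> 'a set" where
  "slope_set v = {\<alpha> *\<^sub>R v n + \<beta> *\<^sub>R v m | n m \<alpha> \<beta>.
     \<bar>\<alpha>\<bar> \<le> weight n \<and> \<bar>\<beta>\<bar> \<le> weight m \<and> \<bar>\<alpha>\<bar> + \<bar>\<beta>\<bar> \<le> weight (max n m) \<and>
     min \<bar>\<alpha>\<bar> \<bar>\<beta>\<bar> \<le> 1 / (real (max n m) + 1)}"

lemma slope_set_single: "\<bar>\<alpha>\<bar> \<le> weight n \<Longrightarrow> \<alpha> *\<^sub>R v n \<in> slope_set v"
  unfolding slope_set_def by (rule CollectI, rule exI[of _ n], rule exI[of _ n]) force

lemma slope_set_pair:
  assumes "d > 0" "0 \<le> x" "0 \<le> y" "x + y + (real (max n m) + 1) * min x y \<le> d"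
  shows "(weight n * x / d) *\<^sub>R v n - (weight m * y / d) *\<^sub>R v m \<in> slope_set v"
proof -
  have xy: "x \<le> d" "y \<le> d" "x + y \<le> d"
    using assms by (smt (verit) min_def mult_nonneg_nonneg of_nat_0_le_iff)+
  have "(real (max n m) + 1) * min x y \<le> d" using assms by linarith
  then have min: "min x y / d \<le> 1 / (real (max n m) + 1)"
    using assms(1) by (simp add: field_simps)
  have "weight n * x + weight m * y \<le> weight (max n m) * (x + y)"
    using weight_mono[of n "max n m"] weight_mono[of m "max n m"] assms(2,3)
    by (simp add: distrib_left add_mono mult_right_mono)
  also have "\<dots> \<le> weight (max n m) * d"
    using xy weight_pos by (simp add: less_imp_le)
  finally have sum: "weight n * x / d + weight m * y / d \<le> weight (max n m)"
    using assms(1) by (simp add: field_simps)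
  have "weight n * x / d \<le> x / d"
    using weight_le_1[of n] weight_pos[of n] assms(1,2) by (intro divide_right_mono mult_left_le_one_le) auto
  moreover have "weight m * y / d \<le> y / d"
    using weight_le_1[of m] weight_pos[of m] assms(1,3) by (intro divide_right_mono mult_left_le_one_le) auto
  ultimately have "min (weight n * x / d) (weight m * y / d) \<le> min x y / d"
    using assms(1) by (auto simp: min_divide_distrib_right intro: min.coboundedI1 min.coboundedI2)
  with min have "min (weight n * x / d) (weight m * y / d) \<le> 1 / (real (max n m) + 1)"
    by linarith
  moreover have "weight n * x / d \<le> weight n" "weight m * y / d \<le> weight m"
    using xy weight_pos assms(1-3) by (simp_all add: divide_le_eq mult_left_le)
  ultimately show ?thesis
    unfolding slope_set_def using assms(1-3) sum weight_pos[of n] weight_pos[of m]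
    by (intro CollectI exI[of _ n] exI[of _ m] exI[of _ "weight n * x / d"]
        exI[of _ "- (weight m * y / d)"]) simp
qed

lemma tent_map_slope:
  assumes "separated_tents c r" "d > 0" "\<bar>s - t\<bar> \<le> d"
  shows "(1/d) *\<^sub>R (tent_map c r v s - tent_map c r v t) \<in> slope_set v"
proof -
  obtain n where n: "\<And>k. k \<noteq> n \<Longrightarrow> tent (c k) (r k) s = 0"
    using separated_tents_active_index[OF assms(1)] by blast
  obtain m where m: "\<And>k. k \<noteq> m \<Longrightarrow> tent (c k) (r k) t = 0"
    using separated_tents_active_index[OF assms(1)] by blast
  define x y where "x = tent (c n) (r n) s" and "y = tent (c m) (r m) t"
  have val: "tent_map c r v s = (weight n * x) *\<^sub>R v n" "tent_map c r v t = (weight m * y) *\<^sub>R v m"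
    unfolding x_def y_def by (rule tent_map_eq, erule n, rule tent_map_eq, erule m)
  show ?thesis
  proof (cases "n = m")
    case True
    have "\<bar>x - tent (c n) (r n) t\<bar> \<le> d"
      unfolding x_def using tent_lipschitz assms(3) order_trans by blast
    then have "\<bar>weight n * (x - tent (c n) (r n) t) / d\<bar> \<le> weight n"
      using assms(2) weight_pos[of n] by (simp add: abs_mult divide_le_eq mult_left_le)
    moreover have "(1/d) *\<^sub>R (tent_map c r v s - tent_map c r v t) =
        (weight n * (x - tent (c n) (r n) t) / d) *\<^sub>R v n"
      using val True by (simp add: y_def algebra_simps diff_divide_distrib)
    ultimately show ?thesis by (simp add: slope_set_single)
  next
    case False
    have "x + y + (real (max n m) + 1) * min x y \<le> d"
      using tent_pair_bound[OF assms(1) False] n m False assms(3) unfolding x_def y_def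
      by (smt (verit))
    then have "(weight n * x / d) *\<^sub>R v n - (weight m * y / d) *\<^sub>R v m \<in> slope_set v"
      using assms(2) tent_nonneg by (intro slope_set_pair) (simp_all add: x_def y_def)
    then show ?thesis using val by (simp add: algebra_simps)
  qed
qed

lemma norm_two_terms_le:
  assumes "\<And>n. norm (v n) = 1" "q = \<alpha> *\<^sub>R v n + \<beta> *\<^sub>R v m"
  shows "norm q \<le> \<bar>\<alpha>\<bar> + \<bar>\<beta>\<bar>"
  using norm_triangle_ineq[of "\<alpha> *\<^sub>R v n" "\<beta> *\<^sub>R v m"] assms by simp

lemma slope_set_norm_le_1:
  assumes "\<And>n. norm (v n) = 1" "q \<in> slope_set v"
  shows "norm q \<le> 1"
proof -
  obtain n m \<alpha> \<beta> where "q = \<alpha> *\<^sub>R v n + \<beta> *\<^sub>R v m" "\<bar>\<alpha>\<bar> + \<bar>\<beta>\<bar> \<le> weight (max n m)"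
    using assms(2) unfolding slope_set_def by blast
  then show ?thesis using norm_two_terms_le[OF assms(1)] weight_le_1 by (meson order_trans)
qed

lemma slope_set_near_unit:
  assumes "\<And>n. norm (v n) = 1" "q \<in> slope_set v" "1 - \<gamma> < norm q"
  obtains n \<alpha> where "1 - 3 * \<gamma> < \<bar>\<alpha>\<bar>" "\<bar>\<alpha>\<bar> \<le> weight n" "norm (q - \<alpha> *\<^sub>R v n) < 2 * \<gamma>"
proof -
  obtain n m \<alpha> \<beta> where q: "q = \<alpha> *\<^sub>R v n + \<beta> *\<^sub>R v m" and bounds: "\<bar>\<alpha>\<bar> \<le> weight n" "\<bar>\<beta>\<bar> \<le> weight m"
    "\<bar>\<alpha>\<bar> + \<bar>\<beta>\<bar> \<le> weight (max n m)" "min \<bar>\<alpha>\<bar> \<bar>\<beta>\<bar> \<le> 1 / (real (max n m) + 1)"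
    using assms(2) unfolding slope_set_def by blast
  define N where "N = real (max n m)"
  have "1 - \<gamma> < 1 - 1 / (N + 2)"
    using assms(3) norm_two_terms_le[OF assms(1) q] bounds(3) by (simp add: weight_def N_def)
  moreover have "1 / (N + 1) \<le> 2 / (N + 2)" by (simp add: N_def field_simps)
  ultimately have small: "min \<bar>\<alpha>\<bar> \<bar>\<beta>\<bar> < 2 * \<gamma>" using bounds(4) by (simp add: N_def)
  have norm_q: "norm q \<le> \<bar>\<alpha>\<bar> + \<bar>\<beta>\<bar>" by (rule norm_two_terms_le[OF assms(1) q])
  show thesis
  proof (cases "\<bar>\<beta>\<bar> \<le> \<bar>\<alpha>\<bar>")
    case True
    then have "\<bar>\<beta>\<bar> < 2 * \<gamma>" using small by (simp add: min_absorb2)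
    moreover have "q - \<alpha> *\<^sub>R v n = \<beta> *\<^sub>R v m" by (simp add: q)
    ultimately show thesis using that[of \<alpha> n] norm_q assms(1,3) bounds(1) by simp
  next
    case False
    then have "\<bar>\<alpha>\<bar> < 2 * \<gamma>" using small by (simp add: min_absorb1)
    moreover have "q - \<beta> *\<^sub>R v m = \<alpha> *\<^sub>R v n" by (simp add: q)
    ultimately show thesis using that[of \<beta> m] norm_q assms(1,3) bounds(2) by simp
  qed
qed

lemma slope_set_limit_norm_ne_1:
  assumes "riesz_sequence v" "\<And>k. Q k \<in> slope_set v" "Q \<longlonglongrightarrow> y"
  shows "norm y \<noteq> 1"
proof
  assume y: "norm y = 1"
  have v: "\<And>n. norm (v n) = 1" using assms(1) by (simp add: riesz_sequence_def)
  have near: "\<exists>n \<alpha>. 1 - 3 * \<gamma> < \<bar>\<alpha>\<bar> \<and> \<bar>\<alpha>\<bar> \<le> weight n \<and> norm (y - \<alpha> *\<^sub>R v n) < 3 * \<gamma>"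
    if \<gamma>: "\<gamma> > 0" for \<gamma>
  proof -
    obtain k where k: "norm (Q k - y) < \<gamma>"
      using assms(3) \<gamma> unfolding LIMSEQ_iff by blast
    then have "1 - \<gamma> < norm (Q k)" using y norm_triangle_ineq3[of y "Q k"] by (simp add: norm_minus_commute)
    then obtain n \<alpha> where "1 - 3 * \<gamma> < \<bar>\<alpha>\<bar>" "\<bar>\<alpha>\<bar> \<le> weight n" "norm (Q k - \<alpha> *\<^sub>R v n) < 2 * \<gamma>"
      using slope_set_near_unit[OF v assms(2)] by metis
    moreover have "norm (y - \<alpha> *\<^sub>R v n) \<le> norm (Q k - y) + norm (Q k - \<alpha> *\<^sub>R v n)"
      using norm_triangle_ineq4[of "Q k - \<alpha> *\<^sub>R v n" "Q k - y"] by (simp add: algebra_simps)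
    ultimately show ?thesis using k by force
  qed
  obtain n0 \<alpha>0 where 0: "29/32 < \<bar>\<alpha>0\<bar>" "norm (y - \<alpha>0 *\<^sub>R v n0) < 3/32"
    using near[of "1/32"] by auto
  text \<open>\<open>\<gamma>\<close> is so small that \<open>\<bar>\<alpha>1\<bar> > weight n0\<close>, which forces \<open>n1 \<noteq> n0\<close>.\<close>
  define \<gamma> where "\<gamma> = min (1/32) (1 / (4 * (real n0 + 2)))"
  have "\<gamma> > 0" by (simp add: \<gamma>_def)
  then obtain n1 \<alpha>1 where 1: "1 - 3 * \<gamma> < \<bar>\<alpha>1\<bar>" "\<bar>\<alpha>1\<bar> \<le> weight n1" "norm (y - \<alpha>1 *\<^sub>R v n1) < 3 * \<gamma>"
    using near by blast
  have "\<gamma> \<le> 1 / (4 * (real n0 + 2))" by (simp add: \<gamma>_def)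
  moreover have "3 * (1 / (4 * (real n0 + 2))) < 1 / (real n0 + 2)" by (simp add: field_simps)
  ultimately have "weight n0 < 1 - 3 * \<gamma>" by (simp add: weight_def)
  then have "n1 \<noteq> n0" using 1 by auto
  then have "29/64 \<le> norm (\<alpha>0 *\<^sub>R v n0 - \<alpha>1 *\<^sub>R v n1)"
    using riesz_sequence_separated[OF assms(1), of n0 n1 "29/32"] 0 1 \<open>\<gamma> > 0\<close>
    by (simp add: \<gamma>_def)
  moreover have "norm (\<alpha>0 *\<^sub>R v n0 - \<alpha>1 *\<^sub>R v n1) \<le> norm (y - \<alpha>0 *\<^sub>R v n0) + norm (y - \<alpha>1 *\<^sub>R v n1)"
    using norm_triangle_ineq4[of "y - \<alpha>1 *\<^sub>R v n1" "y - \<alpha>0 *\<^sub>R v n0"] by (simp add: algebra_simps)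
  ultimately show False using 0 1 by (simp add: \<gamma>_def)
qed

section \<open>Lacunary pairs of distances\<close>

text \<open>For the distances \<open>a n > b n\<close> of \<open>x n\<close>, \<open>y n\<close> to \<open>c\<close>, the first condition makes the slope
  at \<open>(x n, y n)\<close> tend to \<open>1\<close>, the second makes the tents centred at \<open>a n\<close> separated.\<close>
definition lacunary_pairs :: "(nat \<Rightarrow> real) \<Rightarrow> (nat \<Rightarrow> real) \<Rightarrow> bool" where
  "lacunary_pairs a b \<longleftrightarrow> (\<forall>n. 0 < b n \<and> (real n + 3) * b n \<le> a n) \<and>
     (\<forall>n m. n < m \<longrightarrow> (real m + 3) * a m \<le> b n \<or> (real m + 3) * a n \<le> b m)"

lemma lacunary_pairs_less:
  assumes "lacunary_pairs a b"
  shows "0 < b n" "b n < a n"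
proof -
  have "0 < b n" "(real n + 3) * b n \<le> a n" using assms unfolding lacunary_pairs_def by blast+
  moreover have "0 \<le> real n * b n" using calculation(1) by simp
  ultimately show "0 < b n" "b n < a n" unfolding distrib_right by linarith+
qed

lemma lacunary_pairs_inverse:
  assumes "lacunary_pairs a b"
  shows "lacunary_pairs (\<lambda>n. inverse (b n)) (\<lambda>n. inverse (a n))"
proof -
  have pos: "0 < b n" "0 < a n" for n
    using lacunary_pairs_less[OF assms, of n] by simp_all
  have le_inverse: "(real k + 3) * inverse y \<le> inverse x \<longleftrightarrow> (real k + 3) * x \<le> y"
    if "0 < x" "0 < y" for k x y
    using that by (simp add: field_simps)
  show ?thesis
    unfolding lacunary_pairs_def
  proof (intro conjI allI impI)
    fix n
    show "0 < inverse (a n)" using pos by simp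
    show "(real n + 3) * inverse (a n) \<le> inverse (b n)"
      using assms pos unfolding lacunary_pairs_def le_inverse[OF pos] by blast
  next
    fix n m :: nat assume "n < m"
    then have "(real m + 3) * a m \<le> b n \<or> (real m + 3) * a n \<le> b m"
      using assms unfolding lacunary_pairs_def by blast
    then show "(real m + 3) * inverse (b m) \<le> inverse (a n) \<or>
        (real m + 3) * inverse (b n) \<le> inverse (a m)"
      using le_inverse pos by blast
  qed
qed

lemma lacunary_pairs_separated_tents:
  assumes "lacunary_pairs a b"
  shows "separated_tents a (\<lambda>n. a n - b n)"
proof -
  have b: "0 < b n" "(real n + 3) * b n \<le> a n" for n
    using assms unfolding lacunary_pairs_def by blast+
  have less: "a n - b n + (a m - b m) + (real m + 1) * min (a n - b n) (a m - b m) \<le> \<bar>a n - a m\<bar>"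
    if "n < m" for n m
  proof -
    have "(real m + 3) * a m \<le> b n \<or> (real m + 3) * a n \<le> b m"
      using assms that unfolding lacunary_pairs_def by blast
    moreover have "(real m + 1) * min (a n - b n) (a m - b m) \<le> (real m + 1) * a m"
      "(real m + 1) * min (a n - b n) (a m - b m) \<le> (real m + 1) * a n"
      using b[of n] b[of m] by (simp_all add: mult_left_mono)
    ultimately show ?thesis using b[of n] b[of m] by (auto simp: algebra_simps)
  qed
  show ?thesis
    unfolding separated_tents_def
  proof (intro allI impI)
    fix n m :: nat assume "n \<noteq> m"
    then consider "n < m" | "m < n" by linarith
    then show "a n - b n + (a m - b m) + (real (max n m) + 1) * min (a n - b n) (a m - b m)
        \<le> \<bar>a n - a m\<bar>"
    proof cases
      case 1
      then show ?thesis using less[OF 1] by (simp add: max_absorb2)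
    next
      case 2
      then show ?thesis using less[OF 2] by (simp add: max_absorb1 min.commute abs_minus_commute)
    qed
  qed
qed

lemma lacunary_pairs_slope:
  assumes "lacunary_pairs a b"
  shows "1 - 3 / (real n + 2) \<le> weight n * (a n - b n) / (a n + b n)"
proof -
  have b: "0 < b n" "(real n + 3) * b n \<le> a n"
    using assms unfolding lacunary_pairs_def by blast+
  define x where "x = real n + 2"
  have x: "x > 0" by (simp add: x_def)
  have "0 < a n + b n" using lacunary_pairs_less[OF assms, of n] by simp
  moreover have "(a n + b n) * (x - 2) \<le> (a n - b n) * x"
    using b by (simp add: x_def algebra_simps)
  ultimately have "1 - 2 / x \<le> (a n - b n) / (a n + b n)"
    using x by (simp add: field_simps)
  then have "(1 - 1 / x) * (1 - 2 / x) \<le> (1 - 1 / x) * ((a n - b n) / (a n + b n))"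
    using weight_pos[of n] by (intro mult_left_mono) (auto simp: weight_def x_def)
  moreover have "1 - 3 / x \<le> (1 - 1 / x) * (1 - 2 / x)"
    using x by (simp add: field_simps)
  ultimately show ?thesis by (simp add: weight_def x_def)
qed

lemma lacunary_pairs_of_small_elements:
  assumes "S \<subseteq> {0<..}" "\<And>e. e > 0 \<Longrightarrow> \<exists>s\<in>S. s < e"
  shows "\<exists>a b. (\<forall>n. a n \<in> S \<and> b n \<in> S) \<and> lacunary_pairs a b"
proof -
  have "\<exists>s. s \<in> S" using assms(2)[of 1] by auto
  moreover have "\<exists>t. t \<in> S \<and> t * (real n + 4) \<le> s" if "s \<in> S" for s n
  proof -
    have "s / (real n + 4) > 0" using that assms(1) by auto
    then obtain t where "t \<in> S" "t < s / (real n + 4)" using assms(2) by blast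
    then show ?thesis by (intro exI[of _ t]) (simp add: field_simps)
  qed
  ultimately obtain \<sigma> where \<sigma>: "\<And>n. \<sigma> n \<in> S" "\<And>n. \<sigma> (Suc n) * (real n + 4) \<le> \<sigma> n"
    using dependent_nat_choice[of "\<lambda>_ s. s \<in> S" "\<lambda>n s t. t * (real n + 4) \<le> s"] by metis
  have pos: "0 < \<sigma> n" for n using \<sigma>(1) assms(1) by auto
  have "\<sigma> (Suc n) \<le> \<sigma> n" for n
    using \<sigma>(2)[of n] pos[of "Suc n"] by (smt (verit) mult_le_cancel_left1 of_nat_0_le_iff)
  then have dec: "\<sigma> j \<le> \<sigma> i" if "i \<le> j" for i j
    using that decseq_SucI decseqD by metis
  have "lacunary_pairs (\<lambda>n. \<sigma> (2 * n)) (\<lambda>n. \<sigma> (2 * n + 1))"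
    unfolding lacunary_pairs_def
  proof (intro conjI allI impI disjI1)
    fix n
    show "0 < \<sigma> (2 * n + 1)" by (rule pos)
    have "(real n + 3) * \<sigma> (2 * n + 1) \<le> \<sigma> (Suc (2 * n)) * (real (2 * n) + 4)"
      using pos[of "Suc (2 * n)"] by (simp add: mult_right_mono)
    then show "(real n + 3) * \<sigma> (2 * n + 1) \<le> \<sigma> (2 * n)" using \<sigma>(2)[of "2 * n"] by simp
  next
    fix n m :: nat assume "n < m"
    then have m: "Suc (2 * m - 1) = 2 * m" "2 * n + 1 \<le> 2 * m - 1" by auto
    have "(real m + 3) * \<sigma> (2 * m) \<le> \<sigma> (Suc (2 * m - 1)) * (real (2 * m - 1) + 4)"
      using pos[of "2 * m"] \<open>n < m\<close> m(1) by (simp add: mult_right_mono of_nat_diff)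
    also have "\<dots> \<le> \<sigma> (2 * n + 1)" using \<sigma>(2)[of "2 * m - 1"] dec[OF m(2)] by linarith
    finally show "(real m + 3) * \<sigma> (2 * m) \<le> \<sigma> (2 * n + 1)" .
  qed
  moreover have "\<forall>n. \<sigma> (2 * n) \<in> S \<and> \<sigma> (2 * n + 1) \<in> S" using \<sigma>(1) by blast
  ultimately show ?thesis
    by (intro exI[of _ "\<lambda>n. \<sigma> (2 * n)"] exI[of _ "\<lambda>n. \<sigma> (2 * n + 1)"] conjI)
qed

lemma lacunary_pairs_of_large_elements:
  assumes "S \<subseteq> {0<..}" "\<And>e. \<exists>s\<in>S. e < s"
  shows "\<exists>a b. (\<forall>n. a n \<in> S \<and> b n \<in> S) \<and> lacunary_pairs a b"
proof -
  have pos: "inverse ` S \<subseteq> {0<..}" using assms(1) by auto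
  have small: "\<exists>s\<in>inverse ` S. s < e" if "e > 0" for e
  proof -
    obtain s where "s \<in> S" "inverse e < s" using assms(2) by blast
    moreover have "inverse s < e" using less_imp_inverse_less[OF \<open>inverse e < s\<close>] that by simp
    ultimately show ?thesis by blast
  qed
  obtain a b where ab: "\<forall>n. a n \<in> inverse ` S \<and> b n \<in> inverse ` S" "lacunary_pairs a b"
    using lacunary_pairs_of_small_elements[OF pos small] by blast
  have "inverse x \<in> S" if "x \<in> inverse ` S" for x :: real
    using that by auto
  then have "\<forall>n. inverse (b n) \<in> S \<and> inverse (a n) \<in> S" using ab(1) by blast
  moreover have "lacunary_pairs (\<lambda>n. inverse (b n)) (\<lambda>n. inverse (a n))"
    using ab(2) by (rule lacunary_pairs_inverse)
  ultimately show ?thesis by (intro exI conjI)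
qed

lemma infinite_set_small_or_large_distances:
  fixes M :: "'a::real_normed_vector set"
  assumes "\<And>R. compact (cball (0::'a) R)" "infinite M"
  obtains c where "(\<forall>e>0. \<exists>p\<in>M - {c}. dist p c < e) \<or> (\<forall>e. \<exists>p\<in>M - {c}. e < dist p c)"
proof (cases "bounded M")
  case True
  then obtain R where "\<forall>p\<in>M. norm p \<le> R" unfolding bounded_iff by blast
  then have "M \<subseteq> cball 0 R" by auto
  from Heine_Borel_imp_Bolzano_Weierstrass[OF assms this] obtain c where "c islimpt M" by blast
  then have "\<forall>e>0. \<exists>p\<in>M - {c}. dist p c < e" unfolding islimpt_approachable by blast
  then show thesis using that by blast
next
  case False
  have "\<exists>p\<in>M - {0}. e < dist p 0" for e
  proof -
    obtain p where "p \<in> M" "max e 0 < norm p"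
      using False unfolding bounded_iff by (meson not_le)
    then show ?thesis by (intro bexI[of _ p]) auto
  qed
  then show thesis using that by blast
qed

lemma lacunary_pairs_in_infinite_set:
  fixes M :: "'a::real_normed_vector set"
  assumes "\<And>R. compact (cball (0::'a) R)" "infinite M"
  obtains x y c where "\<And>n. x n \<in> M" "\<And>n. y n \<in> M"
    "lacunary_pairs (\<lambda>n. dist (x n) c) (\<lambda>n. dist (y n) c)"
proof -
  obtain c where c: "(\<forall>e>0. \<exists>p\<in>M - {c}. dist p c < e) \<or> (\<forall>e. \<exists>p\<in>M - {c}. e < dist p c)"
    using infinite_set_small_or_large_distances[OF assms] by blast
  define S where "S = (\<lambda>p. dist p c) ` (M - {c})"
  have "S \<subseteq> {0<..}" by (auto simp: S_def)
  moreover have "(\<forall>e>0. \<exists>s\<in>S. s < e) \<or> (\<forall>e. \<exists>s\<in>S. e < s)"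
    using c unfolding S_def by (metis (no_types, lifting) image_eqI)
  ultimately obtain a b where ab: "\<forall>n. a n \<in> S \<and> b n \<in> S" "lacunary_pairs a b"
    using lacunary_pairs_of_small_elements lacunary_pairs_of_large_elements by metis
  have "\<forall>n. \<exists>p. p \<in> M \<and> a n = dist p c" "\<forall>n. \<exists>p. p \<in> M \<and> b n = dist p c"
    using ab(1) unfolding S_def by blast+
  then obtain x y where "\<forall>n. x n \<in> M \<and> a n = dist (x n) c" "\<forall>n. y n \<in> M \<and> b n = dist (y n) c"
    by (metis choice)
  moreover from this have "a = (\<lambda>n. dist (x n) c)" "b = (\<lambda>n. dist (y n) c)" by auto
  ultimately show thesis using that ab(2) by blast
qed

section \<open>A Lipschitz map that does not attain its norm\<close>

lemma lip_norm_eqI: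
  assumes "\<And>p q. p \<in> M \<Longrightarrow> q \<in> M \<Longrightarrow> p \<noteq> q \<Longrightarrow> norm (f p - f q) / dist p q \<le> L"
    and "\<And>\<epsilon>. \<epsilon> > 0 \<Longrightarrow> \<exists>p\<in>M. \<exists>q\<in>M. p \<noteq> q \<and> L - \<epsilon> < norm (f p - f q) / dist p q"
  shows "lip_norm M f = L"
  unfolding lip_norm_def
proof (rule cSup_eq_non_empty)
  show "{norm (f p - f q) / dist p q |p q. p \<in> M \<and> q \<in> M \<and> p \<noteq> q} \<noteq> {}"
    using assms(2)[of 1] by auto
  show "z \<le> L" if "z \<in> {norm (f p - f q) / dist p q |p q. p \<in> M \<and> q \<in> M \<and> p \<noteq> q}" for z
    using that assms(1) by auto
  fix z assume ub: "\<And>w. w \<in> {norm (f p - f q) / dist p q |p q. p \<in> M \<and> q \<in> M \<and> p \<noteq> q} \<Longrightarrow> w \<le> z"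
  show "L \<le> z"
  proof (rule ccontr)
    assume "\<not> L \<le> z"
    then obtain p q where "p \<in> M" "q \<in> M" "p \<noteq> q" "z < norm (f p - f q) / dist p q"
      using assms(2)[of "L - z"] by auto
    then show False using ub[of "norm (f p - f q) / dist p q"] by auto
  qed
qed

lemma not_attains_norm_toward_if_slopes_in:
  assumes "\<And>p q. p \<in> M \<Longrightarrow> q \<in> M \<Longrightarrow> p \<noteq> q \<Longrightarrow> (1 / dist p q) *\<^sub>R (f p - f q) \<in> D"
    and "\<And>Q y. (\<And>k. Q k \<in> D) \<Longrightarrow> Q \<longlonglongrightarrow> y \<Longrightarrow> norm y \<noteq> lip_norm M f"
  shows "\<not> attains_norm_toward M f y"
proof
  assume "attains_norm_toward M f y"
  then obtain p q where pq: "\<forall>k. p k \<in> M \<and> q k \<in> M \<and> p k \<noteq> q k"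
    and lim: "(\<lambda>k. (1 / dist (p k) (q k)) *\<^sub>R (f (p k) - f (q k))) \<longlonglongrightarrow> y"
    and norm: "norm y = lip_norm M f"
    unfolding attains_norm_toward_def by blast
  have "(1 / dist (p k) (q k)) *\<^sub>R (f (p k) - f (q k)) \<in> D" for k
    using assms(1) pq by blast
  then show False using assms(2)[OF _ lim] norm by blast
qed

lemma tent_map_lacunary_pair:
  assumes "lacunary_pairs a b"
  shows "tent_map a (\<lambda>n. a n - b n) v (a n) - tent_map a (\<lambda>n. a n - b n) v (b n)
    = (weight n * (a n - b n)) *\<^sub>R v n"
proof -
  let ?r = "\<lambda>n. a n - b n"
  have sep: "separated_tents a ?r" using assms by (rule lacunary_pairs_separated_tents)
  have "b n \<le> a n" using lacunary_pairs_less(2)[OF assms, of n] by simp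
  then have "tent_map a ?r v s = (weight n * tent (a n) (?r n) s) *\<^sub>R v n" if "s \<in> {a n, b n}" for s
    using that separated_tents_vanish[OF sep, of s n] by (intro tent_map_eq) auto
  moreover have "tent (a n) (?r n) (a n) = a n - b n" "tent (a n) (?r n) (b n) = 0"
    using \<open>b n \<le> a n\<close> by (simp_all add: tent_def)
  ultimately show ?thesis by simp
qed

definition radial_map :: "'a::metric_space set \<Rightarrow> 'a \<Rightarrow> 'a \<Rightarrow> (real \<Rightarrow> 'b::real_normed_vector) \<Rightarrow> 'a \<Rightarrow> 'b"
  where "radial_map M base c G p = (if p \<in> M then G (dist p c) - G (dist base c) else 0)"

lemma radial_tent_map_slope:
  assumes "separated_tents a r" "p \<in> M" "q \<in> M" "p \<noteq> q"
  shows "(1 / dist p q) *\<^sub>R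
    (radial_map M base c (tent_map a r v) p - radial_map M base c (tent_map a r v) q) \<in> slope_set v"
proof -
  have "\<bar>dist p c - dist q c\<bar> \<le> dist p q"
    using abs_dist_diff_le[of p c q] by (simp add: dist_commute)
  then show ?thesis
    using tent_map_slope[OF assms(1), of "dist p q"] assms(2-4) by (simp add: radial_map_def)
qed

lemma radial_tent_map_in_Lip0:
  assumes "separated_tents a r" "\<And>n. norm (v n) = 1" "base \<in> M"
  shows "radial_map M base c (tent_map a r v) \<in> Lip0 M base"
proof -
  let ?f = "radial_map M base c (tent_map a r v)"
  have "norm (?f p - ?f q) \<le> dist p q" if "p \<in> M" "q \<in> M" for p q
  proof (cases "p = q")
    case False
    have "(1 / dist p q) *\<^sub>R (?f p - ?f q) \<in> slope_set v"
      using assms(1) that False by (rule radial_tent_map_slope)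
    then have "norm ((1 / dist p q) *\<^sub>R (?f p - ?f q)) \<le> 1"
      using assms(2) slope_set_norm_le_1 by blast
    then show ?thesis using False by (simp add: divide_le_eq)
  qed simp
  then have "1-lipschitz_on M ?f" by (intro lipschitz_onI) (simp_all add: dist_norm)
  then show ?thesis unfolding Lip0_def using assms(3) by (auto simp: radial_map_def)
qed

lemma lip_norm_radial_tent_map:
  assumes "lacunary_pairs (\<lambda>n. dist (x n) c) (\<lambda>n. dist (y n) c)" "\<And>n. x n \<in> M" "\<And>n. y n \<in> M"
    and "\<And>n. norm (v n) = 1" "base \<in> M"
  defines "f \<equiv> radial_map M base c (tent_map (\<lambda>n. dist (x n) c) (\<lambda>n. dist (x n) c - dist (y n) c) v)"
  shows "lip_norm M f = 1"
proof (rule lip_norm_eqI)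
  define a b where "a = (\<lambda>n. dist (x n) c)" and "b = (\<lambda>n. dist (y n) c)"
  have lacunary: "lacunary_pairs a b" using assms(1) by (simp add: a_def b_def)
  have sep: "separated_tents a (\<lambda>n. a n - b n)" using lacunary by (rule lacunary_pairs_separated_tents)
  show "norm (f p - f q) / dist p q \<le> 1" if "p \<in> M" "q \<in> M" "p \<noteq> q" for p q
  proof -
    have "(1 / dist p q) *\<^sub>R (f p - f q) \<in> slope_set v"
      unfolding f_def using sep that unfolding a_def b_def by (rule radial_tent_map_slope)
    then show ?thesis using assms(4) slope_set_norm_le_1 by (fastforce simp: divide_inverse_commute)
  qed
  fix \<epsilon> :: real assume "\<epsilon> > 0"
  then obtain n :: nat where "3 / \<epsilon> < real n" using reals_Archimedean2 by blast
  have "b n < a n" "0 < b n" using lacunary_pairs_less[OF lacunary] by auto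
  then have "x n \<noteq> y n" by (auto simp: a_def b_def)
  have "norm (f (x n) - f (y n)) = weight n * (a n - b n)"
    using tent_map_lacunary_pair[OF lacunary, of v n] assms(2-4) weight_pos[of n] \<open>b n < a n\<close>
    by (simp add: f_def radial_map_def a_def b_def)
  moreover have "dist (x n) (y n) \<le> a n + b n" by (simp add: a_def b_def dist_triangle2)
  ultimately have "weight n * (a n - b n) / (a n + b n) \<le> norm (f (x n) - f (y n)) / dist (x n) (y n)"
    using weight_pos[of n] \<open>b n < a n\<close> \<open>0 < b n\<close> \<open>x n \<noteq> y n\<close>
    by (simp only:) (intro divide_left_mono mult_pos_pos; simp)
  moreover have "1 - \<epsilon> < 1 - 3 / (real n + 2)"
    using \<open>\<epsilon> > 0\<close> \<open>3 / \<epsilon> < real n\<close> by (simp add: field_simps)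
  moreover have "1 - 3 / (real n + 2) \<le> weight n * (a n - b n) / (a n + b n)"
    using lacunary by (rule lacunary_pairs_slope)
  ultimately have "1 - \<epsilon> < norm (f (x n) - f (y n)) / dist (x n) (y n)" by linarith
  then show "\<exists>p\<in>M. \<exists>q\<in>M. p \<noteq> q \<and> 1 - \<epsilon> < norm (f p - f q) / dist p q"
    using assms(2,3) \<open>x n \<noteq> y n\<close> by blast
qed

lemma Lip0_not_norm_attaining_exists:
  fixes M :: "'a::metric_space set" and v :: "nat \<Rightarrow> 'b::real_normed_vector"
  assumes "riesz_sequence v" "base \<in> M" "\<And>n. x n \<in> M" "\<And>n. y n \<in> M"
    and "lacunary_pairs (\<lambda>n. dist (x n) c) (\<lambda>n. dist (y n) c)"
  obtains f :: "'a \<Rightarrow> 'b" where "f \<in> Lip0 M base" "f \<notin> A_set M base"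
proof -
  define f where
    "f = radial_map M base c (tent_map (\<lambda>n. dist (x n) c) (\<lambda>n. dist (x n) c - dist (y n) c) v)"
  have v: "\<And>n. norm (v n) = 1" using assms(1) by (simp add: riesz_sequence_def)
  have sep: "separated_tents (\<lambda>n. dist (x n) c) (\<lambda>n. dist (x n) c - dist (y n) c)"
    using lacunary_pairs_separated_tents[OF assms(5)] by simp
  have "lip_norm M f = 1"
    unfolding f_def using assms(5,3,4) v assms(2) by (rule lip_norm_radial_tent_map)
  have slopes: "(1 / dist p q) *\<^sub>R (f p - f q) \<in> slope_set v" if "p \<in> M" "q \<in> M" "p \<noteq> q" for p q
    unfolding f_def using sep that by (rule radial_tent_map_slope)
  have "\<not> attains_norm_toward M f z" for z
  proof (rule not_attains_norm_toward_if_slopes_in[OF slopes])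
    fix Q w assume "\<And>k. Q k \<in> slope_set v" "Q \<longlonglongrightarrow> w"
    then show "norm w \<noteq> lip_norm M f"
      using slope_set_limit_norm_ne_1[OF assms(1)] \<open>lip_norm M f = 1\<close> by metis
  qed
  then have "f \<notin> A_set M base" by (simp add: A_set_def)
  moreover have "f \<in> Lip0 M base"
    unfolding f_def using sep v assms(2) by (rule radial_tent_map_in_Lip0)
  ultimately show thesis using that by blast
qed

theorem corollary2p8:
  fixes M :: "'a::banach set" and base :: 'a
  assumes "fin_dim_space TYPE('a)"
    and "infinite M"
    and "base \<in> M"
    and "\<not> fin_dim_space TYPE('b::banach)"
  shows "A_set M base \<subset> (Lip0 M base :: ('a \<Rightarrow> 'b) set)"
proof -
  have "\<And>F::'b set. finite F \<Longrightarrow> span F \<noteq> UNIV"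
    using assms(4) unfolding fin_dim_space_def by blast
  then obtain v :: "nat \<Rightarrow> 'b" where v: "riesz_sequence v"
    using riesz_sequence_exists by blast
  obtain B :: "'a set" where "finite B" "span B = UNIV"
    using assms(1) unfolding fin_dim_space_def by blast
  then have cball: "compact (cball (0::'a) R)" for R
    using compact_span_Int_cball[of B R] by simp
  obtain x y c where xy: "\<And>n. x n \<in> M" "\<And>n. y n \<in> M"
    and lacunary: "lacunary_pairs (\<lambda>n. dist (x n) c) (\<lambda>n. dist (y n) c)"
    using lacunary_pairs_in_infinite_set[OF cball assms(2)] by blast
  obtain f :: "'a \<Rightarrow> 'b" where "f \<in> Lip0 M base" "f \<notin> A_set M base"
    using v assms(3) xy lacunary by (rule Lip0_not_norm_attaining_exists)
  moreover have "A_set M base \<subseteq> Lip0 M base" unfolding A_set_def by blast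
  ultimately show ?thesis by blast
qed

end
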